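(* Let $q\in(0,1)$ and let $W\in\{0,1\}^{I\times I}$ have zero diagonal and satisfy $W\mathbf{1}=W^*\mathbf{1}$; let $d_{\max}=\max_{j\in I}\sum_{i\in I}W_{ij}$. Consider the Broadcast Gossip Algorithm: at each time $t$, independently of the past, a node $j$ is drawn uniformly from $I$; then $x_i(t+1)=(1-q)x_i(t)+qx_j(t)$ for every $i$ with $W_{ij}=1$, and $x_i(t+1)=x_i(t)$ otherwise. Then for every $t\ge0$, $$\mathbb{E}[(\bar x(t)-\bar x(0))^2]\le\frac{q\,d_{\max}}{q\,d_{\max}+N(1-q)}V(x(0)).$$
   Context: $I$ is a finite set of $N$ nodes, $x(0)\in\mathbb{R}^I$ deterministic. $\mathbf{1}$ is the all-ones vector, $W^*$ the transpose. For $y\in\mathbb{R}^I$, $\bar y=\frac1N\sum_i y_i$ and $V(y)=\frac1N\sum_i(y_i-\bar y)^2$. *)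

theory Defs
  imports "HOL-Probability.Probability"
begin

text \<open>States are functions x :: 'a => real; only the values on the node set I matter.\<close>

definition avg :: "'a set \<Rightarrow> ('a \<Rightarrow> real) \<Rightarrow> real" where
  "avg I y = (\<Sum>i\<in>I. y i) / real (card I)"

definition Var :: "'a set \<Rightarrow> ('a \<Rightarrow> real) \<Rightarrow> real" where
  "Var I y = (\<Sum>i\<in>I. (y i - avg I y)^2) / real (card I)"

definition bga_step :: "'a set \<Rightarrow> ('a \<Rightarrow> 'a \<Rightarrow> real) \<Rightarrow> real \<Rightarrow> ('a \<Rightarrow> real) \<Rightarrow> 'a \<Rightarrow> ('a \<Rightarrow> real)" where
  "bga_step I W q x j = (\<lambda>i. if i \<in> I \<and> W i j = 1 then (1 - q) * x i + q * x j else x i)"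

fun bga_dist :: "'a set \<Rightarrow> ('a \<Rightarrow> 'a \<Rightarrow> real) \<Rightarrow> real \<Rightarrow> ('a \<Rightarrow> real) \<Rightarrow> nat \<Rightarrow> ('a \<Rightarrow> real) pmf" where
  "bga_dist I W q x0 0 = return_pmf x0"
| "bga_dist I W q x0 (Suc t) =
     bind_pmf (bga_dist I W q x0 t) (\<lambda>x. map_pmf (bga_step I W q x) (pmf_of_set I))"

end

theory Submission
  imports Defs
begin

text \<open>
  Put \<open>c = avg I x0\<close>, let
  \<open>d = max\<^sub>j \<Sum>\<^sub>i W i j\<close>, \<open>N = card I\<close> and \<open>\<alpha> = q d / (q d + N (1 - q))\<close>, and consider
      \<open>\<Phi>(y) = (avg I y - c)\<^sup>2 + \<alpha> Var I y\<close>.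
  One broadcast step from \<open>x\<close> with drawn node \<open>j\<close> shifts the mean by \<open>q s\<^sub>j / N\<close> and
  changes \<open>N Var\<close> by \<open>q R\<^sub>j - q (1 - q) Q\<^sub>j - q\<^sup>2 s\<^sub>j\<^sup>2 / N\<close>, where \<open>s\<^sub>j\<close>, \<open>R\<^sub>j\<close>, \<open>Q\<^sub>j\<close> are
  sums over the out-neighbours of \<open>j\<close>.  Cauchy-Schwarz gives \<open>s\<^sub>j\<^sup>2 \<le> d Q\<^sub>j\<close>, and the choice
  of \<open>\<alpha>\<close> makes the second-order terms nonpositive; the remaining first-order terms are
  of the form \<open>\<Sum>\<^sub>i W i j (f j - f i)\<close> and vanish after averaging over \<open>j\<close> because \<open>W\<close>
  is balanced.  Hence \<open>\<Phi>\<close> does not increase in expectation along one step, so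
  \<open>E \<Phi>(x(t)) \<le> \<Phi>(x0) = \<alpha> Var I x0\<close>, and \<open>(avg I x(t) - c)\<^sup>2 \<le> \<Phi>(x(t))\<close> concludes.
\<close>

lemma expectation_bind_le:
  fixes p :: "'a pmf" and K :: "'a \<Rightarrow> 'b pmf" and \<Phi> :: "'b \<Rightarrow> real" and \<Psi> :: "'a \<Rightarrow> real"
  assumes fin: "finite (set_pmf p)" and fin_K: "\<And>x. finite (set_pmf (K x))"
    and le: "\<And>x. measure_pmf.expectation (K x) \<Phi> \<le> \<Psi> x"
  shows "measure_pmf.expectation (p \<bind> K) \<Phi> \<le> measure_pmf.expectation p \<Psi>"
proof -
  have "measure_pmf.expectation (p \<bind> K) \<Phi>
      = (\<Sum>a\<in>set_pmf p. pmf p a *\<^sub>R measure_pmf.expectation (K a) \<Phi>)"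
    by (rule pmf_expectation_bind[OF fin fin_K]) simp
  also have "\<dots> \<le> (\<Sum>a\<in>set_pmf p. pmf p a *\<^sub>R \<Psi> a)"
    using le by (intro sum_mono) (simp add: mult_left_mono)
  also have "\<dots> = measure_pmf.expectation p \<Psi>"
    by (rule integral_measure_pmf[OF fin, symmetric]) simp
  finally show ?thesis .
qed

lemma finite_set_bga_dist:
  assumes "finite I" "I \<noteq> {}"
  shows "finite (set_pmf (bga_dist I W q x0 t))"
  using assms by (induction t) auto

lemma bga_dist_supermartingale:
  fixes \<Phi> :: "('a \<Rightarrow> real) \<Rightarrow> real"
  assumes fin: "finite I" and ne: "I \<noteq> {}"
    and step: "\<And>x. measure_pmf.expectation (map_pmf (bga_step I W q x) (pmf_of_set I)) \<Phi> \<le> \<Phi> x"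
  shows "measure_pmf.expectation (bga_dist I W q x0 t) \<Phi> \<le> \<Phi> x0"
proof (induction t)
  case 0
  then show ?case by simp
next
  case (Suc t)
  have "measure_pmf.expectation (bga_dist I W q x0 (Suc t)) \<Phi>
      \<le> measure_pmf.expectation (bga_dist I W q x0 t) \<Phi>"
    using fin ne step
    by (simp only: bga_dist.simps, intro expectation_bind_le finite_set_bga_dist) simp_all
  with Suc show ?case by linarith
qed

lemma sum_sq_dev_shift:
  fixes z :: "'a \<Rightarrow> real"
  assumes "finite I" "I \<noteq> {}"
  shows "(\<Sum>i\<in>I. (z i - b)^2) = (\<Sum>i\<in>I. (z i - avg I z)^2) + real (card I) * (avg I z - b)^2"
proof -
  let ?m = "avg I z"
  have centred: "(\<Sum>i\<in>I. (z i - ?m)) = 0"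
    using assms by (simp add: sum_subtractf avg_def)
  have "(\<Sum>i\<in>I. (z i - b)^2) = (\<Sum>i\<in>I. (z i - ?m)^2 + 2*(?m - b)*(z i - ?m) + (?m - b)^2)"
    by (rule sum.cong) (auto simp: power2_eq_square algebra_simps)
  also have "\<dots> = (\<Sum>i\<in>I. (z i - ?m)^2) + 2*(?m - b)*(\<Sum>i\<in>I. (z i - ?m))
                  + real (card I) * (?m - b)^2"
    by (simp add: sum.distrib sum_distrib_left)
  finally show ?thesis using centred by simp
qed

lemma balanced_edge_differences_vanish:
  fixes W :: "'a \<Rightarrow> 'a \<Rightarrow> real"
  assumes "\<forall>i\<in>I. (\<Sum>j\<in>I. W i j) = (\<Sum>j\<in>I. W j i)"
  shows "(\<Sum>j\<in>I. \<Sum>i\<in>I. W i j * (f j - f i)) = 0"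
proof -
  have "(\<Sum>j\<in>I. \<Sum>i\<in>I. W i j * (f j - f i))
      = (\<Sum>j\<in>I. (\<Sum>i\<in>I. W i j) * f j) - (\<Sum>j\<in>I. \<Sum>i\<in>I. W i j * f i)"
    by (simp add: right_diff_distrib sum_subtractf sum_distrib_right)
  also have "(\<Sum>j\<in>I. \<Sum>i\<in>I. W i j * f i) = (\<Sum>i\<in>I. \<Sum>j\<in>I. W i j * f i)"
    by (rule sum.swap)
  also have "\<dots> = (\<Sum>i\<in>I. (\<Sum>j\<in>I. W j i) * f i)"
    using assms by (simp add: sum_distrib_right[symmetric])
  finally show ?thesis by simp
qed

lemma avg_bga_step:
  assumes "finite I" "\<forall>i\<in>I. W i j \<in> {0,1}"
  shows "avg I (bga_step I W q x j) = avg I x + q * (\<Sum>i\<in>I. W i j * (x j - x i)) / real (card I)"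
proof -
  have "(\<Sum>i\<in>I. bga_step I W q x j i) = (\<Sum>i\<in>I. x i + q * (W i j * (x j - x i)))"
    using assms by (intro sum.cong) (auto simp: bga_step_def algebra_simps)
  also have "\<dots> = (\<Sum>i\<in>I. x i) + q * (\<Sum>i\<in>I. W i j * (x j - x i))"
    by (simp add: sum.distrib sum_distrib_left)
  finally show ?thesis by (simp add: avg_def add_divide_distrib)
qed

lemma sum_sq_bga_step:
  assumes "\<forall>i\<in>I. W i j \<in> {0,1}"
  shows "(\<Sum>i\<in>I. (bga_step I W q x j i - a)^2) = (\<Sum>i\<in>I. (x i - a)^2)
     + q * (\<Sum>i\<in>I. W i j * ((x j - a)^2 - (x i - a)^2))
     - q * (1 - q) * (\<Sum>i\<in>I. W i j * (x j - x i)^2)"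
proof -
  have "(\<Sum>i\<in>I. (bga_step I W q x j i - a)^2) = (\<Sum>i\<in>I. (x i - a)^2
     + q * (W i j * ((x j - a)^2 - (x i - a)^2)) - q * (1 - q) * (W i j * (x j - x i)^2))"
  proof (intro sum.cong refl)
    fix i assume i: "i \<in> I"
    then have "W i j = 0 \<or> W i j = 1" using assms by auto
    with i show "(bga_step I W q x j i - a)^2 = (x i - a)^2
     + q * (W i j * ((x j - a)^2 - (x i - a)^2)) - q * (1 - q) * (W i j * (x j - x i)^2)"
      by (auto simp: bga_step_def power2_eq_square algebra_simps)
  qed
  then show ?thesis
    by (simp add: sum.distrib sum_subtractf sum_distrib_left)
qed

lemma var_bga_step:
  assumes fin: "finite I" and ne: "I \<noteq> {}" and W01: "\<forall>i\<in>I. W i j \<in> {0,1}"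
  shows "real (card I) * Var I (bga_step I W q x j)
    = real (card I) * Var I x
      + q * (\<Sum>i\<in>I. W i j * ((x j - avg I x)^2 - (x i - avg I x)^2))
      - q * (1 - q) * (\<Sum>i\<in>I. W i j * (x j - x i)^2)
      - (q * (\<Sum>i\<in>I. W i j * (x j - x i)))^2 / real (card I)"
proof -
  define x' where "x' = bga_step I W q x j"
  have N: "real (card I) > 0" using fin ne by (simp add: card_gt_0_iff)
  have "(\<Sum>i\<in>I. (x' i - avg I x')^2)
      = (\<Sum>i\<in>I. (x' i - avg I x)^2) - real (card I) * (avg I x' - avg I x)^2"
    using sum_sq_dev_shift[OF fin ne, of x' "avg I x"] by simp
  also have "real (card I) * (avg I x' - avg I x)^2
      = (q * (\<Sum>i\<in>I. W i j * (x j - x i)))^2 / real (card I)"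
    using N avg_bga_step[of I W j q x] fin W01 unfolding x'_def by (simp add: power2_eq_square)
  finally show ?thesis
    using N sum_sq_bga_step[of I W j q x "avg I x"] W01 unfolding x'_def Var_def by simp
qed

lemma cauchy_schwarz_01_weights:
  fixes W :: "'a \<Rightarrow> 'a \<Rightarrow> real" and x :: "'a \<Rightarrow> real"
  assumes "\<forall>i\<in>I. W i j \<in> {0,1}"
  shows "(\<Sum>i\<in>I. W i j * (x j - x i))^2 \<le> (\<Sum>i\<in>I. W i j) * (\<Sum>i\<in>I. W i j * (x j - x i)^2)"
proof -
  have idem: "W i j * W i j = W i j" if "i \<in> I" for i
    using assms that by auto
  have "(\<Sum>i\<in>I. W i j * (x j - x i))^2 = (\<Sum>i\<in>I. W i j * (W i j * (x j - x i)))^2"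
    using idem by (intro arg_cong[where f = "\<lambda>t. t^2"] sum.cong) (simp_all add: mult.assoc[symmetric])
  also have "\<dots> \<le> (\<Sum>i\<in>I. (W i j)^2) * (\<Sum>i\<in>I. (W i j * (x j - x i))^2)"
    by (rule Cauchy_Schwarz_ineq_sum)
  also have "(\<Sum>i\<in>I. (W i j)^2) = (\<Sum>i\<in>I. W i j)"
    using idem by (intro sum.cong) (simp_all add: power2_eq_square)
  also have "(\<Sum>i\<in>I. (W i j * (x j - x i))^2) = (\<Sum>i\<in>I. W i j * (x j - x i)^2)"
    using assms by (intro sum.cong) (auto simp: power2_eq_square)
  finally show ?thesis .
qed

text \<open>Change of \<open>\<Phi>(y) = (avg I y - c)\<^sup>2 + \<alpha> Var I y\<close> along a broadcast from \<open>j\<close>: if \<open>\<alpha>\<close>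
  solves \<open>\<alpha> (q d + N (1 - q)) = q d\<close> for an upper bound \<open>d\<close> on the out-degree of \<open>j\<close>, all
  second-order terms cancel against the dissipation and only first-order terms remain.\<close>
lemma lyapunov_step_pointwise:
  fixes W :: "'a \<Rightarrow> 'a \<Rightarrow> real" and x :: "'a \<Rightarrow> real"
  assumes fin: "finite I" and ne: "I \<noteq> {}" and W01: "\<forall>i\<in>I. W i j \<in> {0,1}"
    and deg: "(\<Sum>i\<in>I. W i j) \<le> d"
    and al: "\<alpha> * (q * d + real (card I) * (1 - q)) = q * d" "\<alpha> \<le> 1"
  shows "(avg I (bga_step I W q x j) - c)^2 + \<alpha> * Var I (bga_step I W q x j)
     \<le> (avg I x - c)^2 + \<alpha> * Var I x
       + 2 * (avg I x - c) * q * (\<Sum>i\<in>I. W i j * (x j - x i)) / real (card I)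
       + \<alpha> * q * (\<Sum>i\<in>I. W i j * ((x j - avg I x)^2 - (x i - avg I x)^2)) / real (card I)"
proof -
  define N where "N = real (card I)"
  define s where "s = (\<Sum>i\<in>I. W i j * (x j - x i))"
  define R where "R = (\<Sum>i\<in>I. W i j * ((x j - avg I x)^2 - (x i - avg I x)^2))"
  define Q where "Q = (\<Sum>i\<in>I. W i j * (x j - x i)^2)"
  have N: "N > 0" using fin ne by (simp add: N_def card_gt_0_iff)
  have avg': "avg I (bga_step I W q x j) = avg I x + q * s / N"
    unfolding s_def N_def using avg_bga_step[of I W j q x] fin W01 by simp
  have var': "Var I (bga_step I W q x j) = Var I x + (q * R - q * (1 - q) * Q - (q * s)^2 / N) / N"
    using var_bga_step[of I W j q x] fin ne W01 N unfolding s_def R_def Q_def N_def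
    by (simp add: field_simps)
  have "Q \<ge> 0" unfolding Q_def using W01 by (intro sum_nonneg) auto
  then have "s^2 \<le> d * Q"
    using cauchy_schwarz_01_weights[of I W j x] W01 deg unfolding s_def Q_def
    by (meson mult_right_mono order_trans)
  then have "(1 - \<alpha>) * q^2 * s^2 \<le> (1 - \<alpha>) * q^2 * (d * Q)"
    using al(2) by (intro mult_left_mono) auto
  also have "\<dots> = q * Q * ((1 - \<alpha>) * q * d)"
    by (simp add: algebra_simps power2_eq_square)
  also have "(1 - \<alpha>) * q * d = \<alpha> * N * (1 - q)"
    using al(1) unfolding N_def by (simp add: algebra_simps)
  finally have second_order: "(1 - \<alpha>) * q^2 * s^2 - \<alpha> * q * (1 - q) * Q * N \<le> 0"
    by (simp add: algebra_simps)
  have "(avg I (bga_step I W q x j) - c)^2 + \<alpha> * Var I (bga_step I W q x j)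
      = (avg I x - c)^2 + \<alpha> * Var I x + 2 * (avg I x - c) * q * s / N + \<alpha> * q * R / N
        + ((1 - \<alpha>) * q^2 * s^2 - \<alpha> * q * (1 - q) * Q * N) / N^2"
    using N unfolding avg' var' by (simp add: field_simps power2_eq_square)
  also have "\<dots> \<le> (avg I x - c)^2 + \<alpha> * Var I x + 2 * (avg I x - c) * q * s / N + \<alpha> * q * R / N"
    using divide_nonpos_pos[OF second_order, of "N^2"] N by simp
  finally show ?thesis unfolding s_def R_def N_def by simp
qed

text \<open>Averaging over the uniformly drawn broadcaster: the first-order terms are edge
  differences of the potentials \<open>x\<close> and \<open>(x - avg I x)\<^sup>2\<close> and vanish for balanced \<open>W\<close>, so
  \<open>\<Phi>\<close> does not increase in expectation.\<close>
lemma lyapunov_step_expectation: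
  fixes W :: "'a \<Rightarrow> 'a \<Rightarrow> real" and x :: "'a \<Rightarrow> real"
  assumes fin: "finite I" and ne: "I \<noteq> {}"
    and W01: "\<forall>i\<in>I. \<forall>j\<in>I. W i j \<in> {0,1}"
    and bal: "\<forall>i\<in>I. (\<Sum>j\<in>I. W i j) = (\<Sum>j\<in>I. W j i)"
    and deg: "\<forall>j\<in>I. (\<Sum>i\<in>I. W i j) \<le> d"
    and al: "\<alpha> * (q * d + real (card I) * (1 - q)) = q * d" "\<alpha> \<le> 1"
  shows "measure_pmf.expectation (map_pmf (bga_step I W q x) (pmf_of_set I))
           (\<lambda>y. (avg I y - c)^2 + \<alpha> * Var I y) \<le> (avg I x - c)^2 + \<alpha> * Var I x"
proof -
  define N where "N = real (card I)"
  define \<Phi> where "\<Phi> = (\<lambda>y. (avg I y - c)^2 + \<alpha> * Var I y)"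
  define u where "u = (\<lambda>k. (x k - avg I x)^2)"
  have N: "N > 0" using fin ne by (simp add: N_def card_gt_0_iff)
  have "(\<Sum>j\<in>I. \<Phi> (bga_step I W q x j))
     \<le> (\<Sum>j\<in>I. \<Phi> x + (2 * (avg I x - c) * q / N) * (\<Sum>i\<in>I. W i j * (x j - x i))
                   + (\<alpha> * q / N) * (\<Sum>i\<in>I. W i j * (u j - u i)))"
    using lyapunov_step_pointwise[OF fin ne, of W _ d \<alpha> q x c] W01 deg al
    unfolding \<Phi>_def u_def N_def by (intro sum_mono) auto
  also have "\<dots> = N * \<Phi> x + (2 * (avg I x - c) * q / N) * (\<Sum>j\<in>I. \<Sum>i\<in>I. W i j * (x j - x i))
                  + (\<alpha> * q / N) * (\<Sum>j\<in>I. \<Sum>i\<in>I. W i j * (u j - u i))"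
    unfolding N_def by (simp add: sum.distrib sum_distrib_left)
  also have "\<dots> = N * \<Phi> x"
    using balanced_edge_differences_vanish[OF bal] by simp
  finally have "(\<Sum>j\<in>I. \<Phi> (bga_step I W q x j)) / N \<le> \<Phi> x"
    using N by (simp add: divide_le_eq mult.commute)
  moreover have "measure_pmf.expectation (map_pmf (bga_step I W q x) (pmf_of_set I)) \<Phi>
      = (\<Sum>j\<in>I. \<Phi> (bga_step I W q x j)) / N"
    using fin ne by (simp add: integral_pmf_of_set N_def)
  ultimately show ?thesis unfolding \<Phi>_def by simp
qed

lemma Var_nonneg: "0 \<le> Var I y"
  unfolding Var_def by (intro divide_nonneg_nonneg sum_nonneg) auto

lemma lyapunov_weight:
  fixes q d N :: real
  assumes "0 \<le> d" "0 < q" "q < 1" "0 < N"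
  defines "\<alpha> \<equiv> q * d / (q * d + N * (1 - q))"
  shows "\<alpha> * (q * d + N * (1 - q)) = q * d" and "0 \<le> \<alpha>" and "\<alpha> \<le> 1"
proof -
  have den: "q * d + N * (1 - q) > 0" using assms by (simp add: add_nonneg_pos)
  then show "\<alpha> * (q * d + N * (1 - q)) = q * d" unfolding \<alpha>_def by simp
  show "0 \<le> \<alpha>" "\<alpha> \<le> 1" unfolding \<alpha>_def using den assms by simp_all
qed

theorem mainTheorem11:
  fixes I :: "'a set" and W :: "'a \<Rightarrow> 'a \<Rightarrow> real" and q :: real and x0 :: "'a \<Rightarrow> real" and t :: nat
  assumes "finite I" and "I \<noteq> {}"
    and "0 < q" and "q < 1"
    and "\<forall>i\<in>I. \<forall>j\<in>I. W i j \<in> {0, 1}"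
    and "\<forall>i\<in>I. W i i = 0"
    and "\<forall>i\<in>I. (\<Sum>j\<in>I. W i j) = (\<Sum>j\<in>I. W j i)"
  shows "measure_pmf.expectation (bga_dist I W q x0 t) (\<lambda>x. (avg I x - avg I x0)^2)
    \<le> q * Max ((\<lambda>j. \<Sum>i\<in>I. W i j) ` I)
        / (q * Max ((\<lambda>j. \<Sum>i\<in>I. W i j) ` I) + real (card I) * (1 - q)) * Var I x0"
proof -
  note fin = assms(1) and ne = assms(2) and q = assms(3,4) and W01 = assms(5) and bal = assms(7)
  define d where "d = Max ((\<lambda>j. \<Sum>i\<in>I. W i j) ` I)"
  define \<alpha> where "\<alpha> = q * d / (q * d + real (card I) * (1 - q))"
  define \<Phi> where "\<Phi> = (\<lambda>y. (avg I y - avg I x0)^2 + \<alpha> * Var I y)"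
  have deg: "\<forall>j\<in>I. (\<Sum>i\<in>I. W i j) \<le> d" unfolding d_def using fin by auto
  obtain j0 where j0: "j0 \<in> I" using ne by auto
  have "0 \<le> (\<Sum>i\<in>I. W i j0)" using W01 j0 by (intro sum_nonneg) force
  with deg j0 have "0 \<le> d" by fastforce
  with q fin ne have \<alpha>: "\<alpha> * (q * d + real (card I) * (1 - q)) = q * d" "0 \<le> \<alpha>" "\<alpha> \<le> 1"
    using lyapunov_weight[of d q "real (card I)"] unfolding \<alpha>_def by (simp_all add: card_gt_0_iff)
  have "measure_pmf.expectation (bga_dist I W q x0 t) \<Phi> \<le> \<Phi> x0"
    using lyapunov_step_expectation[OF fin ne W01 bal deg \<alpha>(1,3)] unfolding \<Phi>_def
    by (intro bga_dist_supermartingale[OF fin ne])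
  moreover have "measure_pmf.expectation (bga_dist I W q x0 t) (\<lambda>x. (avg I x - avg I x0)^2)
      \<le> measure_pmf.expectation (bga_dist I W q x0 t) \<Phi>"
    using finite_set_bga_dist[OF fin ne] \<alpha>(2) unfolding \<Phi>_def
    by (intro integral_mono integrable_measure_pmf_finite) (auto intro!: mult_nonneg_nonneg Var_nonneg)
  moreover have "\<Phi> x0 = \<alpha> * Var I x0" unfolding \<Phi>_def by simp
  ultimately show ?thesis unfolding \<alpha>_def d_def by linarith
qed

end
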